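(* Let $\phi,\varphi:\mathbb{R}\to\mathbb{R}$ be activation functions, let $\boldsymbol{W}_{\mathrm{in}},\boldsymbol{W}_{\mathrm{out}},\boldsymbol{W}\in L^2(\mathbb{Z}_p\times\mathbb{Z}_p)$ and $\boldsymbol{\xi},\boldsymbol{\xi}_{\mathrm{out}},\mathbf{x}\in L^2(\mathbb{Z}_p)$. If $L_\phi\|\boldsymbol{W}\|_2\in(0,1)$, then there exists a unique $\boldsymbol{h}\in L^2(\mathbb{Z}_p)$ with $$\boldsymbol{h}(x)=\int_{\mathbb{Z}_p}\boldsymbol{W}(x,y)\phi(\boldsymbol{h}(y))\,dy+\int_{\mathbb{Z}_p}\boldsymbol{W}_{\mathrm{in}}(x,y)\mathbf{x}(y)\,dy+\boldsymbol{\xi}(x),$$ hence a unique output $\boldsymbol{y}(x)=\int_{\mathbb{Z}_p}\boldsymbol{W}_{\mathrm{out}}(x,y)\varphi(\boldsymbol{h}(y))\,dy+\boldsymbol{\xi}_{\mathrm{out}}(x)$, with $\boldsymbol{h},\boldsymbol{y}\in L^2(\mathbb{Z}_p)$. Furthermore, $$\|\boldsymbol{h}\|_2\le 1+\|\boldsymbol{W}_{\mathrm{in}}\|_2\|\mathbf{x}\|_2+\|\boldsymbol{\xi}\|_2.$$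
   Context: $p$ is a prime, $\mathbb{Z}_p$ the ring of $p$-adic integers with Haar measure $dx$ normalized so that $\int_{\mathbb{Z}_p}dx=1$ (product measure on $\mathbb{Z}_p\times\mathbb{Z}_p$); $\|\cdot\|_2$ is the $L^2$ norm. An activation function is a map $\omega:\mathbb{R}\to\mathbb{R}$ that is globally Lipschitz, $|\omega(s)-\omega(t)|\le L_\omega|s-t|$ for all $s,t$, with $\omega(0)=0$; following the paper's standing convention, activation functions are moreover bounded with $L_\omega=\|\omega\|_\infty$. *)

theory Defs
  imports "HOL-Probability.Probability"
begin

text \<open>The p-adic integers as a measure space: a p-adic integer is identified with its
  sequence of p-adic digits (x = sum_k d_k p^k), and the normalized Haar measure on Z_p
  is the infinite product of the uniform measures on the digit sets {0,..,p-1}.\<close>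
definition Zp :: "nat \<Rightarrow> (nat \<Rightarrow> nat) measure" where
  "Zp p = PiM UNIV (\<lambda>_. measure_pmf (pmf_of_set {..<p}))"

definition L2 :: "'a measure \<Rightarrow> ('a \<Rightarrow> real) \<Rightarrow> bool" where
  "L2 M f \<longleftrightarrow> f \<in> borel_measurable M \<and> integrable M (\<lambda>x. (f x)\<^sup>2)"

definition L2norm :: "'a measure \<Rightarrow> ('a \<Rightarrow> real) \<Rightarrow> real" where
  "L2norm M f = sqrt (\<integral>x. (f x)\<^sup>2 \<partial>M)"

text \<open>Sup norm; by the paper's convention this is also the Lipschitz constant L_omega.\<close>
definition Lact :: "(real \<Rightarrow> real) \<Rightarrow> real" where
  "Lact \<omega> = (SUP s. \<bar>\<omega> s\<bar>)"

definition activation :: "(real \<Rightarrow> real) \<Rightarrow> bool" where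
  "activation \<omega> \<longleftrightarrow> bounded (range \<omega>) \<and> \<omega> 0 = 0 \<and>
     (\<forall>s t. \<bar>\<omega> s - \<omega> t\<bar> \<le> Lact \<omega> * \<bar>s - t\<bar>)"

end

theory Submission
  imports Defs
begin

text \<open>The hidden state solves h = F h with F g = W(phi o g) + b, where W acts as the integral
  operator with kernel W. By Cauchy-Schwarz in the second variable, such an operator is bounded on L2
  by the L2 norm of its kernel, and phi is Lact phi-Lipschitz, so F is an L2 contraction with constant
  q = Lact phi * ||W||_2 < 1; this gives uniqueness. For existence, the Picard iterates from 0 have
  increments of L2 norm O(q^n); on a probability space the L1 norms are no larger, so the increments
  are almost everywhere absolutely summable and the iterates converge almost everywhere. Since phi is
  bounded and continuous, dominated convergence passes the equation to the limit. Boundedness of phi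
  also gives ||W(phi o h)||_2 <= q < 1, whence the norm bound.\<close>

section \<open>Square-integrable functions\<close>

lemma discriminant_le_if_quadratic_nonneg:
  fixes A B C :: real
  assumes nonneg: "\<And>t. 0 \<le> A - 2 * t * B + t\<^sup>2 * C" and "0 \<le> C"
  shows "B\<^sup>2 \<le> A * C"
proof (cases "C = 0")
  case True
  have "B = 0"
  proof (rule ccontr)
    assume "B \<noteq> 0"
    have "0 \<le> A - 2 * ((A + 1) / (2 * B)) * B" using nonneg[of "(A + 1) / (2 * B)"] True by simp
    also have "\<dots> = -1" using \<open>B \<noteq> 0\<close> by (simp add: field_simps)
    finally show False by simp
  qed
  then show ?thesis using True by simp
next
  case False
  then have "C > 0" using \<open>0 \<le> C\<close> by simp
  have "0 \<le> A - 2 * (B / C) * B + (B / C)\<^sup>2 * C" by (rule nonneg)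
  also have "\<dots> = (A * C - B\<^sup>2) / C" using \<open>C > 0\<close> by (simp add: field_simps power2_eq_square)
  finally show ?thesis using \<open>C > 0\<close> by (simp add: zero_le_divide_iff)
qed

lemma L2_imp_borel_measurable: "L2 M f \<Longrightarrow> f \<in> borel_measurable M"
  by (simp add: L2_def)

lemma L2_imp_integrable_square: "L2 M f \<Longrightarrow> integrable M (\<lambda>x. (f x)\<^sup>2)"
  by (simp add: L2_def)

lemma L2norm_nonneg: "0 \<le> L2norm M f"
  by (simp add: L2norm_def)

lemma integrable_mult_if_L2:
  fixes f g :: "'a \<Rightarrow> real"
  assumes "L2 M f" "L2 M g"
  shows "integrable M (\<lambda>x. f x * g x)"
proof (rule Bochner_Integration.integrable_bound)
  show "integrable M (\<lambda>x. (f x)\<^sup>2 + (g x)\<^sup>2)"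
    using assms by (simp add: L2_imp_integrable_square)
  show "AE x in M. norm (f x * g x) \<le> norm ((f x)\<^sup>2 + (g x)\<^sup>2)"
  proof (intro AE_I2)
    fix x
    have "2 * \<bar>f x\<bar> * \<bar>g x\<bar> \<le> (f x)\<^sup>2 + (g x)\<^sup>2"
      using sum_squares_bound[of "\<bar>f x\<bar>" "\<bar>g x\<bar>"] by simp
    moreover have "0 \<le> \<bar>f x\<bar> * \<bar>g x\<bar>" by simp
    ultimately have "\<bar>f x\<bar> * \<bar>g x\<bar> \<le> (f x)\<^sup>2 + (g x)\<^sup>2" by linarith
    then show "norm (f x * g x) \<le> norm ((f x)\<^sup>2 + (g x)\<^sup>2)"
      by (simp add: abs_mult)
  qed
qed (use assms in \<open>auto simp: L2_def\<close>)

lemma Cauchy_Schwarz_integral: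
  fixes f g :: "'a \<Rightarrow> real"
  assumes f: "L2 M f" and g: "L2 M g"
  shows "(\<integral>x. f x * g x \<partial>M)\<^sup>2 \<le> (\<integral>x. (f x)\<^sup>2 \<partial>M) * (\<integral>x. (g x)\<^sup>2 \<partial>M)"
proof (rule discriminant_le_if_quadratic_nonneg)
  fix t :: real
  have "(\<lambda>x. (f x - t * g x)\<^sup>2) = (\<lambda>x. (f x)\<^sup>2 - 2 * t * (f x * g x) + t\<^sup>2 * (g x)\<^sup>2)"
    by (simp add: power2_diff power_mult_distrib algebra_simps)
  then have "(\<integral>x. (f x - t * g x)\<^sup>2 \<partial>M)
      = (\<integral>x. (f x)\<^sup>2 \<partial>M) - 2 * t * (\<integral>x. f x * g x \<partial>M) + t\<^sup>2 * (\<integral>x. (g x)\<^sup>2 \<partial>M)"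
    using f g integrable_mult_if_L2[OF f g] by (simp add: L2_imp_integrable_square)
  moreover have "0 \<le> (\<integral>x. (f x - t * g x)\<^sup>2 \<partial>M)" by simp
  ultimately show "0 \<le> (\<integral>x. (f x)\<^sup>2 \<partial>M) - 2 * t * (\<integral>x. f x * g x \<partial>M) + t\<^sup>2 * (\<integral>x. (g x)\<^sup>2 \<partial>M)"
    by simp
qed simp

lemma L2_add:
  fixes f g :: "'a \<Rightarrow> real"
  assumes "L2 M f" "L2 M g"
  shows "L2 M (\<lambda>x. f x + g x)"
proof -
  have "(\<lambda>x. (f x + g x)\<^sup>2) = (\<lambda>x. (f x)\<^sup>2 + 2 * (f x * g x) + (g x)\<^sup>2)"
    by (simp add: power2_sum algebra_simps)
  then show ?thesis
    using assms integrable_mult_if_L2[OF assms] by (simp add: L2_def borel_measurable_add)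
qed

lemma L2_diff:
  fixes f g :: "'a \<Rightarrow> real"
  assumes "L2 M f" "L2 M g"
  shows "L2 M (\<lambda>x. f x - g x)"
  using L2_add[OF assms(1), of "\<lambda>x. - g x"] assms(2) by (simp add: L2_def)

lemma L2norm_triangle_ineq:
  fixes f g :: "'a \<Rightarrow> real"
  assumes f: "L2 M f" and g: "L2 M g"
  shows "L2norm M (\<lambda>x. f x + g x) \<le> L2norm M f + L2norm M g"
proof -
  define A C B where "A = (\<integral>x. (f x)\<^sup>2 \<partial>M)" and "C = (\<integral>x. (g x)\<^sup>2 \<partial>M)"
    and "B = (\<integral>x. f x * g x \<partial>M)"
  have "0 \<le> A" "0 \<le> C" by (simp_all add: A_def C_def)
  have "B\<^sup>2 \<le> A * C" unfolding A_def B_def C_def by (rule Cauchy_Schwarz_integral[OF f g])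
  then have "B \<le> sqrt A * sqrt C"
    by (metis real_le_rsqrt real_sqrt_mult abs_le_D1 real_sqrt_abs)
  have "(\<integral>x. (f x + g x)\<^sup>2 \<partial>M) = (\<integral>x. (f x)\<^sup>2 + 2 * (f x * g x) + (g x)\<^sup>2 \<partial>M)"
    by (simp add: power2_sum algebra_simps)
  also have "\<dots> = A + 2 * B + C"
    using f g integrable_mult_if_L2[OF f g] by (simp add: A_def B_def C_def L2_imp_integrable_square)
  also have "\<dots> \<le> (sqrt A + sqrt C)\<^sup>2"
    using \<open>B \<le> sqrt A * sqrt C\<close> \<open>0 \<le> A\<close> \<open>0 \<le> C\<close> by (simp add: power2_sum)
  finally show ?thesis
    unfolding L2norm_def A_def C_def by (simp add: real_le_lsqrt)
qed

lemma L2_cong_AE: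
  assumes "L2 M f" "g \<in> borel_measurable M" "AE x in M. f x = g x"
  shows "L2 M g"
proof -
  have "AE x in M. (f x)\<^sup>2 = (g x)\<^sup>2" using assms(3) by eventually_elim simp
  then show ?thesis
    using assms integrable_cong_AE[of "\<lambda>x. (f x)\<^sup>2" M "\<lambda>x. (g x)\<^sup>2"] by (auto simp: L2_def)
qed

lemma L2norm_cong_AE:
  assumes "f \<in> borel_measurable M" "g \<in> borel_measurable M" "AE x in M. f x = g x"
  shows "L2norm M f = L2norm M g"
  unfolding L2norm_def using assms by (intro arg_cong[where f = sqrt] integral_cong_AE) auto

lemma AE_eq_0_if_L2norm_eq_0:
  assumes "L2 M f" "L2norm M f = 0"
  shows "AE x in M. f x = 0"
proof -
  have "(\<integral>x. (f x)\<^sup>2 \<partial>M) = 0" using assms(2) by (simp add: L2norm_def)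
  then have "AE x in M. (f x)\<^sup>2 = 0"
    using integral_nonneg_eq_0_iff_AE[OF L2_imp_integrable_square[OF assms(1)]] by simp
  then show ?thesis by simp
qed

lemma L2_if_abs_le_mult:
  fixes f g :: "'a \<Rightarrow> real"
  assumes "L2 M g" "f \<in> borel_measurable M" "0 \<le> c" "\<And>x. \<bar>f x\<bar> \<le> c * \<bar>g x\<bar>"
  shows "L2 M f" and "L2norm M f \<le> c * L2norm M g"
proof -
  have le: "(f x)\<^sup>2 \<le> c\<^sup>2 * (g x)\<^sup>2" for x
    by (metis abs_ge_zero assms(4) power2_abs power_mono power_mult_distrib)
  have int: "integrable M (\<lambda>x. c\<^sup>2 * (g x)\<^sup>2)"
    using assms(1) by (simp add: L2_imp_integrable_square)
  show "L2 M f"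
    unfolding L2_def using le assms(2) by (intro conjI Bochner_Integration.integrable_bound[OF int]) auto
  have "(\<integral>x. (f x)\<^sup>2 \<partial>M) \<le> (\<integral>x. c\<^sup>2 * (g x)\<^sup>2 \<partial>M)"
    using \<open>L2 M f\<close> le int by (intro integral_mono) (auto simp: L2_imp_integrable_square)
  also have "\<dots> = (c * L2norm M g)\<^sup>2"
    by (simp add: L2norm_def power_mult_distrib)
  finally have "(\<integral>x. (f x)\<^sup>2 \<partial>M) \<le> (c * L2norm M g)\<^sup>2" .
  with \<open>0 \<le> c\<close> show "L2norm M f \<le> c * L2norm M g"
    unfolding L2norm_def[of M f] by (simp add: real_le_lsqrt L2norm_nonneg)
qed

lemma (in finite_measure) L2_const: "L2 M (\<lambda>_. c)"
  by (simp add: L2_def)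

lemma (in prob_space) L2norm_const: "L2norm M (\<lambda>_. c) = \<bar>c\<bar>"
  by (simp add: L2norm_def prob_space)

lemma (in prob_space) integral_abs_le_L2norm:
  assumes "L2 M f"
  shows "(\<integral>x. \<bar>f x\<bar> \<partial>M) \<le> L2norm M f"
proof -
  have "L2 M (\<lambda>x. \<bar>f x\<bar>)" using assms by (auto simp: L2_def intro: borel_measurable_abs)
  then have "(\<integral>x. \<bar>f x\<bar> * 1 \<partial>M)\<^sup>2 \<le> (\<integral>x. \<bar>f x\<bar>\<^sup>2 \<partial>M) * (\<integral>x. 1\<^sup>2 \<partial>M)"
    using L2_const by (rule Cauchy_Schwarz_integral)
  then show ?thesis by (simp add: L2norm_def prob_space real_le_rsqrt)
qed

lemma AE_summable_abs_if_summable_integral_abs: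
  fixes f :: "nat \<Rightarrow> 'a \<Rightarrow> real"
  assumes integrable: "\<And>n. integrable M (f n)"
    and summable: "summable (\<lambda>n. \<integral>x. \<bar>f n x\<bar> \<partial>M)"
  shows "AE x in M. summable (\<lambda>n. \<bar>f n x\<bar>)"
proof -
  have [measurable]: "f n \<in> borel_measurable M" for n using integrable by simp
  have "(\<integral>\<^sup>+x. (\<Sum>n. ennreal \<bar>f n x\<bar>) \<partial>M) = (\<Sum>n. \<integral>\<^sup>+x. ennreal \<bar>f n x\<bar> \<partial>M)"
    by (rule nn_integral_suminf) auto
  also have "\<dots> = (\<Sum>n. ennreal (\<integral>x. \<bar>f n x\<bar> \<partial>M))"
    by (intro suminf_cong nn_integral_eq_integral) (use integrable in auto)
  also have "\<dots> = ennreal (\<Sum>n. \<integral>x. \<bar>f n x\<bar> \<partial>M)"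
    by (rule suminf_ennreal2) (use summable in auto)
  finally have "(\<integral>\<^sup>+x. (\<Sum>n. ennreal \<bar>f n x\<bar>) \<partial>M) \<noteq> \<infinity>" by simp
  then have "AE x in M. (\<Sum>n. ennreal \<bar>f n x\<bar>) \<noteq> \<infinity>"
    by (rule nn_integral_PInf_AE[rotated]) measurable
  then show ?thesis
    by eventually_elim (rule summable_suminf_not_top, auto)
qed

lemma (in prob_space) AE_convergent_if_L2norm_diff_le_geometric:
  fixes u :: "nat \<Rightarrow> 'a \<Rightarrow> real"
  assumes L2_u: "\<And>n. L2 M (u n)"
    and geometric: "\<And>n. L2norm M (\<lambda>x. u (Suc n) x - u n x) \<le> C * q ^ n"
    and "0 \<le> q" "q < 1"
  shows "AE x in M. convergent (\<lambda>n. u n x)"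
proof -
  have L2_step: "L2 M (\<lambda>x. u (Suc n) x - u n x)" for n by (rule L2_diff[OF L2_u L2_u])
  have "summable (\<lambda>n. \<integral>x. \<bar>u (Suc n) x - u n x\<bar> \<partial>M)"
  proof (rule summable_comparison_test)
    have "norm (\<integral>x. \<bar>u (Suc n) x - u n x\<bar> \<partial>M) \<le> C * q ^ n" for n
      using order_trans[OF integral_abs_le_L2norm[OF L2_step] geometric]
      by (simp add: abs_of_nonneg integral_nonneg)
    then show "\<exists>N. \<forall>n\<ge>N. norm (\<integral>x. \<bar>u (Suc n) x - u n x\<bar> \<partial>M) \<le> C * q ^ n" by blast
    show "summable (\<lambda>n. C * q ^ n)"
      using \<open>0 \<le> q\<close> \<open>q < 1\<close> by (intro summable_mult summable_geometric) simp
  qed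
  moreover have "integrable M (\<lambda>x. u (Suc n) x - u n x)" for n
    using square_integrable_imp_integrable[OF L2_imp_borel_measurable L2_imp_integrable_square]
      L2_step by blast
  ultimately have "AE x in M. summable (\<lambda>n. \<bar>u (Suc n) x - u n x\<bar>)"
    by (intro AE_summable_abs_if_summable_integral_abs)
  then show ?thesis
  proof eventually_elim
    case (elim x)
    then have "summable (\<lambda>n. u (Suc n) x - u n x)" by (rule summable_rabs_cancel)
    then have "convergent (\<lambda>n. \<Sum>i<n. u (Suc i) x - u i x)"
      by (simp only: summable_iff_convergent)
    then show "convergent (\<lambda>n. u n x)"
      by (simp add: sum_lessThan_telescope[of "\<lambda>i. u i x"] convergent_diff_const_right_iff)
  qed
qed

lemma activation_abs_le:
  assumes "activation \<omega>"
  shows "\<bar>\<omega> s\<bar> \<le> Lact \<omega>"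
proof -
  obtain c where "\<And>s. \<bar>\<omega> s\<bar> \<le> c"
    using assms by (auto simp: activation_def bounded_iff)
  then have "bdd_above (range (\<lambda>s. \<bar>\<omega> s\<bar>))" by (intro bdd_aboveI2)
  then show ?thesis unfolding Lact_def by (rule cSUP_upper[rotated]) simp
qed

lemma activation_Lact_nonneg: "activation \<omega> \<Longrightarrow> 0 \<le> Lact \<omega>"
  using activation_abs_le[of \<omega> 0] by linarith

lemma activation_lipschitz: "activation \<omega> \<Longrightarrow> \<bar>\<omega> s - \<omega> t\<bar> \<le> Lact \<omega> * \<bar>s - t\<bar>"
  by (simp add: activation_def)

lemma continuous_on_activation:
  assumes "activation \<omega>"
  shows "continuous_on UNIV \<omega>"
proof (rule lipschitz_on_continuous_on)
  show "(Lact \<omega>)-lipschitz_on UNIV \<omega>"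
    using activation_lipschitz[OF assms] activation_Lact_nonneg[OF assms]
    by (auto simp: lipschitz_on_def dist_real_def)
qed

lemma isCont_activation: "activation \<omega> \<Longrightarrow> isCont \<omega> s"
  using continuous_on_activation continuous_on_eq_continuous_at open_UNIV by blast

lemma borel_measurable_activation: "activation \<omega> \<Longrightarrow> \<omega> \<in> borel_measurable borel"
  by (intro borel_measurable_continuous_onI continuous_on_activation)

lemma (in prob_space) L2_activation_comp:
  assumes "activation \<omega>" "g \<in> borel_measurable M"
  shows "L2 M (\<lambda>x. \<omega> (g x))" and "L2norm M (\<lambda>x. \<omega> (g x)) \<le> Lact \<omega>"
proof -
  have [measurable]: "\<omega> \<in> borel_measurable borel" "g \<in> borel_measurable M"
    using assms by (simp_all add: borel_measurable_activation)
  have "\<bar>\<omega> (g x)\<bar> \<le> Lact \<omega> * \<bar>1\<bar>" for x using activation_abs_le[OF assms(1)] by simp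
  then show "L2 M (\<lambda>x. \<omega> (g x))" and "L2norm M (\<lambda>x. \<omega> (g x)) \<le> Lact \<omega>"
    using L2_if_abs_le_mult[OF L2_const, of "\<lambda>x. \<omega> (g x)" "Lact \<omega>" 1]
      activation_Lact_nonneg[OF assms(1)] by (simp_all add: L2norm_const)
qed

lemma L2norm_activation_comp_diff_le:
  assumes "activation \<omega>" "L2 M f" "L2 M g"
  shows "L2norm M (\<lambda>x. \<omega> (f x) - \<omega> (g x)) \<le> Lact \<omega> * L2norm M (\<lambda>x. f x - g x)"
proof (rule L2_if_abs_le_mult(2)[OF L2_diff[OF assms(2,3)]])
  have [measurable]: "\<omega> \<in> borel_measurable borel" "f \<in> borel_measurable M" "g \<in> borel_measurable M"
    using assms by (simp_all add: borel_measurable_activation L2_def)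
  show "(\<lambda>x. \<omega> (f x) - \<omega> (g x)) \<in> borel_measurable M" by measurable
qed (use assms(1) activation_Lact_nonneg activation_lipschitz in auto)

section \<open>Integral operators with square-integrable kernels\<close>

definition integral_operator :: "'b measure \<Rightarrow> ('a \<times> 'b \<Rightarrow> real) \<Rightarrow> ('b \<Rightarrow> real) \<Rightarrow> 'a \<Rightarrow> real"
  where "integral_operator N K g x = (\<integral>y. K (x, y) * g y \<partial>N)"

context pair_sigma_finite
begin

lemma borel_measurable_integral_operator [measurable]:
  assumes [measurable]: "K \<in> borel_measurable (M1 \<Otimes>\<^sub>M M2)" "g \<in> borel_measurable M2"
  shows "integral_operator M2 K g \<in> borel_measurable M1"
  unfolding integral_operator_def by measurable

lemma AE_L2_section:
  assumes "L2 (M1 \<Otimes>\<^sub>M M2) K"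
  shows "AE x in M1. L2 M2 (\<lambda>y. K (x, y))"
  using AE_integrable_fst'[OF L2_imp_integrable_square[OF assms]] AE_space
  by eventually_elim (simp add: L2_def measurable_Pair2[OF L2_imp_borel_measurable[OF assms]])

lemma L2_integral_operator:
  assumes K: "L2 (M1 \<Otimes>\<^sub>M M2) K" and g: "L2 M2 g"
  shows "L2 M1 (integral_operator M2 K g)"
    and "L2norm M1 (integral_operator M2 K g) \<le> L2norm (M1 \<Otimes>\<^sub>M M2) K * L2norm M2 g"
proof -
  have [measurable]: "K \<in> borel_measurable (M1 \<Otimes>\<^sub>M M2)" "g \<in> borel_measurable M2"
    using K g by (simp_all add: L2_def)
  define G where "G = (\<integral>y. (g y)\<^sup>2 \<partial>M2)"
  have bound: "AE x in M1. (integral_operator M2 K g x)\<^sup>2 \<le> (\<integral>y. (K (x, y))\<^sup>2 \<partial>M2) * G"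
    using AE_L2_section[OF K]
    by eventually_elim (simp add: integral_operator_def G_def Cauchy_Schwarz_integral g)
  have integrable_bound: "integrable M1 (\<lambda>x. (\<integral>y. (K (x, y))\<^sup>2 \<partial>M2) * G)"
    using integrable_fst'[OF L2_imp_integrable_square[OF K]] by simp
  have integrable_square: "integrable M1 (\<lambda>x. (integral_operator M2 K g x)\<^sup>2)"
    using bound by (intro Bochner_Integration.integrable_bound[OF integrable_bound]) auto
  then show "L2 M1 (integral_operator M2 K g)" by (simp add: L2_def)
  have "(\<integral>x. (integral_operator M2 K g x)\<^sup>2 \<partial>M1) \<le> (\<integral>x. (\<integral>y. (K (x, y))\<^sup>2 \<partial>M2) * G \<partial>M1)"
    by (rule integral_mono_AE[OF integrable_square integrable_bound bound])
  also have "\<dots> = (\<integral>z. (K z)\<^sup>2 \<partial>(M1 \<Otimes>\<^sub>M M2)) * G"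
    using integral_fst'[OF L2_imp_integrable_square[OF K]] by simp
  finally show "L2norm M1 (integral_operator M2 K g) \<le> L2norm (M1 \<Otimes>\<^sub>M M2) K * L2norm M2 g"
    unfolding L2norm_def G_def by (metis real_sqrt_le_mono real_sqrt_mult)
qed

lemma AE_integral_operator_diff:
  assumes "L2 (M1 \<Otimes>\<^sub>M M2) K" "L2 M2 f" "L2 M2 g"
  shows "AE x in M1. integral_operator M2 K f x - integral_operator M2 K g x
                     = integral_operator M2 K (\<lambda>y. f y - g y) x"
  using AE_L2_section[OF assms(1)]
  by eventually_elim
    (use assms(2,3) in \<open>simp add: integral_operator_def integrable_mult_if_L2 right_diff_distrib\<close>)

end

lemma integral_operator_tendsto:
  fixes u :: "nat \<Rightarrow> 'b \<Rightarrow> real"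
  assumes K: "integrable N (\<lambda>y. K (x, y))"
    and [measurable]: "\<And>n. u n \<in> borel_measurable N" "g \<in> borel_measurable N"
    and lim: "AE y in N. (\<lambda>n. u n y) \<longlonglongrightarrow> g y"
    and bounded: "\<And>n y. \<bar>u n y\<bar> \<le> c"
  shows "(\<lambda>n. integral_operator N K (u n) x) \<longlonglongrightarrow> integral_operator N K g x"
  unfolding integral_operator_def
proof (rule integral_dominated_convergence[where w = "\<lambda>y. c * \<bar>K (x, y)\<bar>"])
  have [measurable]: "(\<lambda>y. K (x, y)) \<in> borel_measurable N" using K by simp
  show "(\<lambda>y. K (x, y) * u n y) \<in> borel_measurable N" for n by measurable
  show "(\<lambda>y. K (x, y) * g y) \<in> borel_measurable N" by measurable
  show "integrable N (\<lambda>y. c * \<bar>K (x, y)\<bar>)" using K by simp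
  show "AE y in N. (\<lambda>n. K (x, y) * u n y) \<longlonglongrightarrow> K (x, y) * g y"
    using lim by eventually_elim (rule tendsto_mult_left)
  show "AE y in N. norm (K (x, y) * u n y) \<le> c * \<bar>K (x, y)\<bar>" for n
    using bounded[of n] by (intro AE_I2) (metis abs_ge_zero abs_mult mult.commute mult_right_mono real_norm_def)
qed

section \<open>Fixed points of contractions of L2\<close>

lemma L2norm_funpow_diff_le:
  fixes F :: "('a \<Rightarrow> real) \<Rightarrow> 'a \<Rightarrow> real"
  assumes L2_F: "\<And>f. L2 M f \<Longrightarrow> L2 M (F f)"
    and contraction: "\<And>f g. L2 M f \<Longrightarrow> L2 M g \<Longrightarrow>
      L2norm M (\<lambda>x. F f x - F g x) \<le> q * L2norm M (\<lambda>x. f x - g x)"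
    and "0 \<le> q" "L2 M f"
  shows "L2norm M (\<lambda>x. (F ^^ Suc n) f x - (F ^^ n) f x) \<le> L2norm M (\<lambda>x. F f x - f x) * q ^ n"
proof (induction n)
  case (Suc n)
  have L2_iterate: "L2 M ((F ^^ k) f)" for k
    by (induction k) (simp_all add: L2_F \<open>L2 M f\<close>)
  have "L2norm M (\<lambda>x. (F ^^ Suc (Suc n)) f x - (F ^^ Suc n) f x)
        \<le> q * L2norm M (\<lambda>x. (F ^^ Suc n) f x - (F ^^ n) f x)"
    using contraction[OF L2_iterate[of "Suc n"] L2_iterate[of n]] by simp
  also have "\<dots> \<le> q * (L2norm M (\<lambda>x. F f x - f x) * q ^ n)"
    using Suc \<open>0 \<le> q\<close> by (rule mult_left_mono)
  finally show ?case by (simp add: mult_ac)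
qed simp

lemma AE_eq_if_contraction_fixed_points:
  fixes F :: "('a \<Rightarrow> real) \<Rightarrow> 'a \<Rightarrow> real"
  assumes L2_F: "\<And>f. L2 M f \<Longrightarrow> L2 M (F f)"
    and contraction: "\<And>f g. L2 M f \<Longrightarrow> L2 M g \<Longrightarrow>
      L2norm M (\<lambda>x. F f x - F g x) \<le> q * L2norm M (\<lambda>x. f x - g x)"
    and "q < 1"
    and h: "L2 M h" "AE x in M. h x = F h x"
    and h': "L2 M h'" "AE x in M. h' x = F h' x"
  shows "AE x in M. h' x = h x"
proof -
  have [measurable]: "h \<in> borel_measurable M" "h' \<in> borel_measurable M"
    "F h \<in> borel_measurable M" "F h' \<in> borel_measurable M"
    using h h' L2_F by (simp_all add: L2_def)
  have "L2norm M (\<lambda>x. h' x - h x) = L2norm M (\<lambda>x. F h' x - F h x)"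
    using h(2) h'(2) by (intro L2norm_cong_AE) auto
  also have "\<dots> \<le> q * L2norm M (\<lambda>x. h' x - h x)"
    by (rule contraction[OF h'(1) h(1)])
  finally have "(1 - q) * L2norm M (\<lambda>x. h' x - h x) \<le> 0"
    by (simp add: algebra_simps)
  then have "L2norm M (\<lambda>x. h' x - h x) = 0"
    using \<open>q < 1\<close> L2norm_nonneg[of M "\<lambda>x. h' x - h x"] by (simp add: mult_le_0_iff)
  then have "AE x in M. h' x - h x = 0"
    by (rule AE_eq_0_if_L2norm_eq_0[OF L2_diff[OF h'(1) h(1)]])
  then show ?thesis by eventually_elim simp
qed

lemma (in prob_space) ex_AE_fixed_point_if_contraction:
  fixes F :: "('a \<Rightarrow> real) \<Rightarrow> 'a \<Rightarrow> real"
  assumes L2_F: "\<And>f. f \<in> borel_measurable M \<Longrightarrow> L2 M (F f)"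
    and contraction: "\<And>f g. L2 M f \<Longrightarrow> L2 M g \<Longrightarrow>
      L2norm M (\<lambda>x. F f x - F g x) \<le> q * L2norm M (\<lambda>x. f x - g x)"
    and "0 \<le> q" "q < 1"
    and closed: "\<And>u g. (\<And>n. L2 M (u n)) \<Longrightarrow> g \<in> borel_measurable M \<Longrightarrow>
      AE x in M. (\<lambda>n. u n x) \<longlonglongrightarrow> g x \<Longrightarrow> AE x in M. (\<lambda>n. F (u n) x) \<longlonglongrightarrow> F g x"
  shows "\<exists>h. L2 M h \<and> (AE x in M. h x = F h x)"
  \<comment> \<open>In place of completeness of L2, \<open>closed\<close> lets the almost-everywhere limit of the
    Picard iterates inherit the fixed-point equation.\<close>
proof -
  have L2_F': "L2 M (F f)" if "L2 M f" for f
    using L2_F[OF L2_imp_borel_measurable[OF that]] .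
  have L2_0: "L2 M (\<lambda>_. 0)" by (simp add: L2_def)
  define u where "u n = (F ^^ n) (\<lambda>_. 0)" for n
  have L2_u: "L2 M (u n)" for n
    by (induction n) (simp_all add: u_def L2_0 L2_F')
  have [measurable]: "u n \<in> borel_measurable M" for n
    using L2_u by (rule L2_imp_borel_measurable)
  have "L2norm M (\<lambda>x. u (Suc n) x - u n x) \<le> L2norm M (\<lambda>x. F (\<lambda>_. 0) x - 0) * q ^ n" for n
    unfolding u_def by (rule L2norm_funpow_diff_le[OF L2_F' contraction \<open>0 \<le> q\<close> L2_0])
  then have "AE x in M. convergent (\<lambda>n. u n x)"
    by (rule AE_convergent_if_L2norm_diff_le_geometric[OF L2_u _ \<open>0 \<le> q\<close> \<open>q < 1\<close>])
  define h where "h x = lim (\<lambda>n. u n x)" for x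
  have lim: "AE x in M. (\<lambda>n. u n x) \<longlonglongrightarrow> h x"
    using \<open>AE x in M. convergent (\<lambda>n. u n x)\<close>
    by eventually_elim (simp add: h_def convergent_LIMSEQ_iff)
  have h_measurable: "h \<in> borel_measurable M" unfolding h_def by measurable
  have fixed_point: "AE x in M. h x = F h x"
    using lim closed[OF L2_u h_measurable lim]
  proof eventually_elim
    case (elim x)
    have "(\<lambda>n. u (Suc n) x) \<longlonglongrightarrow> h x" using elim(1) by (rule LIMSEQ_Suc)
    moreover have "(\<lambda>n. u (Suc n) x) \<longlonglongrightarrow> F h x" using elim(2) by (simp add: u_def)
    ultimately show ?case by (rule LIMSEQ_unique)
  qed
  have "L2 M h"
    by (rule L2_cong_AE[OF L2_F[OF h_measurable] h_measurable])
      (use fixed_point in \<open>eventually_elim, simp\<close>)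
  with fixed_point show ?thesis by blast
qed

section \<open>The hidden-state equation\<close>

lemma (in pair_prob_space) L2norm_integral_operator_activation_diff_le:
  assumes \<phi>: "activation \<phi>" and K: "L2 (M1 \<Otimes>\<^sub>M M2) K" and f: "L2 M2 f" and g: "L2 M2 g"
  shows "L2norm M1 (\<lambda>x. integral_operator M2 K (\<lambda>y. \<phi> (f y)) x - integral_operator M2 K (\<lambda>y. \<phi> (g y)) x)
    \<le> Lact \<phi> * L2norm (M1 \<Otimes>\<^sub>M M2) K * L2norm M2 (\<lambda>y. f y - g y)"
proof -
  have [measurable]: "\<phi> \<in> borel_measurable borel" "K \<in> borel_measurable (M1 \<Otimes>\<^sub>M M2)"
    "f \<in> borel_measurable M2" "g \<in> borel_measurable M2"
    using \<phi> K f g by (simp_all add: borel_measurable_activation L2_def)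
  have L2_\<phi>f: "L2 M2 (\<lambda>y. \<phi> (f y))" and L2_\<phi>g: "L2 M2 (\<lambda>y. \<phi> (g y))"
    using \<phi> by (simp_all add: M2.L2_activation_comp)
  have "L2norm M1 (\<lambda>x. integral_operator M2 K (\<lambda>y. \<phi> (f y)) x - integral_operator M2 K (\<lambda>y. \<phi> (g y)) x)
      = L2norm M1 (integral_operator M2 K (\<lambda>y. \<phi> (f y) - \<phi> (g y)))"
    by (rule L2norm_cong_AE[OF _ _ AE_integral_operator_diff[OF K L2_\<phi>f L2_\<phi>g]]) measurable
  also have "\<dots> \<le> L2norm (M1 \<Otimes>\<^sub>M M2) K * L2norm M2 (\<lambda>y. \<phi> (f y) - \<phi> (g y))"
    by (rule L2_integral_operator(2)[OF K L2_diff[OF L2_\<phi>f L2_\<phi>g]])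
  also have "\<dots> \<le> L2norm (M1 \<Otimes>\<^sub>M M2) K * (Lact \<phi> * L2norm M2 (\<lambda>y. f y - g y))"
    by (rule mult_left_mono[OF L2norm_activation_comp_diff_le[OF \<phi> f g] L2norm_nonneg])
  finally show ?thesis by (simp add: mult_ac)
qed

lemma (in prob_space) hidden_state_equation_unique_solution:
  fixes \<phi> :: "real \<Rightarrow> real" and W :: "'a \<times> 'a \<Rightarrow> real" and b :: "'a \<Rightarrow> real"
  assumes \<phi>: "activation \<phi>" and W: "L2 (M \<Otimes>\<^sub>M M) W" and b: "L2 M b"
    and "Lact \<phi> * L2norm (M \<Otimes>\<^sub>M M) W < 1"
  shows "\<exists>h. L2 M h \<and> (AE x in M. h x = integral_operator M W (\<lambda>y. \<phi> (h y)) x + b x)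
    \<and> (\<forall>h'. L2 M h' \<and> (AE x in M. h' x = integral_operator M W (\<lambda>y. \<phi> (h' y)) x + b x)
           \<longrightarrow> (AE x in M. h' x = h x))"
proof -
  interpret P: pair_prob_space M M by unfold_locales
  define F where "F g x = integral_operator M W (\<lambda>y. \<phi> (g y)) x + b x" for g x
  define q where "q = Lact \<phi> * L2norm (M \<Otimes>\<^sub>M M) W"
  have "0 \<le> q" "q < 1"
    using assms(4) activation_Lact_nonneg[OF \<phi>] by (simp_all add: q_def L2norm_nonneg)
  have [measurable]: "\<phi> \<in> borel_measurable borel" "W \<in> borel_measurable (M \<Otimes>\<^sub>M M)"
    using \<phi> W by (simp_all add: borel_measurable_activation L2_def)
  have L2_F: "L2 M (F g)" if "g \<in> borel_measurable M" for g
    unfolding F_def by (intro L2_add b P.L2_integral_operator(1)[OF W] L2_activation_comp(1)[OF \<phi> that])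
  have contraction: "L2norm M (\<lambda>x. F f x - F g x) \<le> q * L2norm M (\<lambda>x. f x - g x)"
    if "L2 M f" "L2 M g" for f g
    using P.L2norm_integral_operator_activation_diff_le[OF \<phi> W that] by (simp add: F_def q_def)
  have closed: "AE x in M. (\<lambda>n. F (u n) x) \<longlonglongrightarrow> F g x"
    if L2_u: "\<And>n. L2 M (u n)" and [measurable]: "g \<in> borel_measurable M"
      and lim: "AE x in M. (\<lambda>n. u n x) \<longlonglongrightarrow> g x" for u g
  proof -
    have [measurable]: "u n \<in> borel_measurable M" for n
      using L2_u by (rule L2_imp_borel_measurable)
    have lim_\<phi>: "AE y in M. (\<lambda>n. \<phi> (u n y)) \<longlonglongrightarrow> \<phi> (g y)"
      using lim by eventually_elim (rule isCont_tendsto_compose[OF isCont_activation[OF \<phi>]])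
    have tendsto: "(\<lambda>n. F (u n) x) \<longlonglongrightarrow> F g x" if W_x: "L2 M (\<lambda>y. W (x, y))" for x
      unfolding F_def
    proof (intro tendsto_add tendsto_const integral_operator_tendsto[where c = "Lact \<phi>"])
      show "integrable M (\<lambda>y. W (x, y))"
        using square_integrable_imp_integrable[OF L2_imp_borel_measurable[OF W_x] L2_imp_integrable_square[OF W_x]] .
      show "(\<lambda>y. \<phi> (u n y)) \<in> borel_measurable M" for n by measurable
      show "(\<lambda>y. \<phi> (g y)) \<in> borel_measurable M" by measurable
      show "\<bar>\<phi> (u n y)\<bar> \<le> Lact \<phi>" for n y by (rule activation_abs_le[OF \<phi>])
    qed (rule lim_\<phi>)
    show ?thesis
      using P.AE_L2_section[OF W] by eventually_elim (rule tendsto)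
  qed
  obtain h where h: "L2 M h" "AE x in M. h x = F h x"
    using ex_AE_fixed_point_if_contraction[OF L2_F contraction \<open>0 \<le> q\<close> \<open>q < 1\<close> closed] by blast
  have "AE x in M. h' x = h x" if "L2 M h'" "AE x in M. h' x = F h' x" for h'
    by (rule AE_eq_if_contraction_fixed_points[OF L2_F[OF L2_imp_borel_measurable] contraction \<open>q < 1\<close> h that])
  with h show ?thesis unfolding F_def by blast
qed

lemma (in prob_space) L2norm_hidden_state_le:
  fixes \<phi> :: "real \<Rightarrow> real" and W :: "'a \<times> 'a \<Rightarrow> real" and b h :: "'a \<Rightarrow> real"
  assumes \<phi>: "activation \<phi>" and W: "L2 (M \<Otimes>\<^sub>M M) W" and b: "L2 M b"
    and "Lact \<phi> * L2norm (M \<Otimes>\<^sub>M M) W \<le> 1"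
    and h: "L2 M h" and eq: "AE x in M. h x = integral_operator M W (\<lambda>y. \<phi> (h y)) x + b x"
  shows "L2norm M h \<le> 1 + L2norm M b"
proof -
  interpret P: pair_prob_space M M by unfold_locales
  define T where "T = integral_operator M W (\<lambda>y. \<phi> (h y))"
  have L2_\<phi>h: "L2 M (\<lambda>y. \<phi> (h y))" and norm_\<phi>h: "L2norm M (\<lambda>y. \<phi> (h y)) \<le> Lact \<phi>"
    using L2_activation_comp[OF \<phi> L2_imp_borel_measurable[OF h]] by simp_all
  have L2_T: "L2 M T"
    unfolding T_def using W L2_\<phi>h by (rule P.L2_integral_operator(1))
  have "L2norm M h = L2norm M (\<lambda>x. T x + b x)"
    using L2_add[OF L2_T b] h eq by (intro L2norm_cong_AE) (simp_all add: T_def L2_imp_borel_measurable)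
  also have "\<dots> \<le> L2norm M T + L2norm M b"
    using L2_T b by (rule L2norm_triangle_ineq)
  also have "L2norm M T \<le> L2norm (M \<Otimes>\<^sub>M M) W * Lact \<phi>"
    unfolding T_def using P.L2_integral_operator(2)[OF W L2_\<phi>h] norm_\<phi>h
    by (meson L2norm_nonneg mult_left_mono order_trans)
  finally show ?thesis
    using assms(4) by (simp add: mult.commute)
qed

theorem proposition1:
  fixes p :: nat
    and \<phi> \<psi> :: "real \<Rightarrow> real"
    and W_in W_out W :: "(nat \<Rightarrow> nat) \<times> (nat \<Rightarrow> nat) \<Rightarrow> real"
    and \<xi> \<xi>_out xin :: "(nat \<Rightarrow> nat) \<Rightarrow> real"
  assumes "prime p"
    and "activation \<phi>" and "activation \<psi>"
    and "L2 (Zp p \<Otimes>\<^sub>M Zp p) W_in" and "L2 (Zp p \<Otimes>\<^sub>M Zp p) W_out" and "L2 (Zp p \<Otimes>\<^sub>M Zp p) W"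
    and "L2 (Zp p) \<xi>" and "L2 (Zp p) \<xi>_out" and "L2 (Zp p) xin"
    and "0 < Lact \<phi> * L2norm (Zp p \<Otimes>\<^sub>M Zp p) W"
    and "Lact \<phi> * L2norm (Zp p \<Otimes>\<^sub>M Zp p) W < 1"
  shows "\<exists>h. L2 (Zp p) h
    \<and> (AE x in Zp p. h x = (\<integral>y. W (x, y) * \<phi> (h y) \<partial>Zp p)
                          + (\<integral>y. W_in (x, y) * xin y \<partial>Zp p) + \<xi> x)
    \<and> (\<forall>h'. L2 (Zp p) h'
          \<and> (AE x in Zp p. h' x = (\<integral>y. W (x, y) * \<phi> (h' y) \<partial>Zp p)
                          + (\<integral>y. W_in (x, y) * xin y \<partial>Zp p) + \<xi> x)
          \<longrightarrow> (AE x in Zp p. h' x = h x))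
    \<and> L2 (Zp p) (\<lambda>x. (\<integral>y. W_out (x, y) * \<psi> (h y) \<partial>Zp p) + \<xi>_out x)
    \<and> L2norm (Zp p) h \<le> 1 + L2norm (Zp p \<Otimes>\<^sub>M Zp p) W_in * L2norm (Zp p) xin
                         + L2norm (Zp p) \<xi>"
proof -
  interpret Zp: prob_space "Zp p"
    unfolding Zp_def by (intro prob_space_PiM prob_space_measure_pmf)
  interpret P: pair_prob_space "Zp p" "Zp p" by unfold_locales
  define input where "input = integral_operator (Zp p) W_in xin"
  have L2_input: "L2 (Zp p) input"
    unfolding input_def using assms(4,9) by (rule P.L2_integral_operator(1))
  have L2_b: "L2 (Zp p) (\<lambda>x. input x + \<xi> x)"
    using L2_input assms(7) by (rule L2_add)
  obtain h where h: "L2 (Zp p) h"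
    and eq: "AE x in Zp p. h x = integral_operator (Zp p) W (\<lambda>y. \<phi> (h y)) x + (input x + \<xi> x)"
    and unique: "\<forall>h'. L2 (Zp p) h'
      \<and> (AE x in Zp p. h' x = integral_operator (Zp p) W (\<lambda>y. \<phi> (h' y)) x + (input x + \<xi> x))
      \<longrightarrow> (AE x in Zp p. h' x = h x)"
    using Zp.hidden_state_equation_unique_solution[OF assms(2,6) L2_b assms(11)] by blast
  have "L2norm (Zp p) h \<le> 1 + L2norm (Zp p) (\<lambda>x. input x + \<xi> x)"
    using assms(11) by (intro Zp.L2norm_hidden_state_le[OF assms(2,6) L2_b _ h eq]) simp
  also have "\<dots> \<le> 1 + (L2norm (Zp p \<Otimes>\<^sub>M Zp p) W_in * L2norm (Zp p) xin + L2norm (Zp p) \<xi>)"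
    using L2norm_triangle_ineq[OF L2_input assms(7)] P.L2_integral_operator(2)[OF assms(4,9)]
    unfolding input_def by linarith
  finally have bound: "L2norm (Zp p) h \<le> 1 + L2norm (Zp p \<Otimes>\<^sub>M Zp p) W_in * L2norm (Zp p) xin + L2norm (Zp p) \<xi>"
    by simp
  have "L2 (Zp p) (\<lambda>x. integral_operator (Zp p) W_out (\<lambda>y. \<psi> (h y)) x + \<xi>_out x)"
    using P.L2_integral_operator(1)[OF assms(5) Zp.L2_activation_comp(1)[OF assms(3) L2_imp_borel_measurable[OF h]]]
      assms(8) by (rule L2_add)
  with h eq unique bound show ?thesis
    unfolding input_def integral_operator_def add.assoc by blast
qed

end
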